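(* Let $(\mathbf x_1,y_1),\dots,(\mathbf x_n,y_n)$ be observations with $y_i\in\mathbb R$ and $\mathbf x_i\in\mathbb R^p$. Let $H$ be a set of real-valued functions on $\mathbb R^p$ (base learners) and let $$\Omega=\{(f(\mathbf x_1),\dots,f(\mathbf x_n))^\top : f\in \operatorname{span}(H)\}\subseteq\mathbb R^n .$$ Let $s(y,f)$ be a loss such that for each $y$ the map $f\mapsto s(y,f)$ is convex on $\mathbb R$, and let $g$ be a function such that $\ell=g\circ s$ belongs to the CC-family (see context); assume in addition that $g$ is bounded below on its domain. For $\mathbf f=(f_1,\dots,f_n)^\top\in\Omega$ put $$\rho(\mathbf f)=\sum_{i=1}^n g\bigl(s(y_i,f_i)\bigr).$$ Given a starting point $\mathbf f^{(0)}\in\Omega$, generate $\mathbf f^{(1)},\mathbf f^{(2)},\dots$ as follows: for $k=1,2,\dots$, 1. compute $z_i=s(y_i,f^{(k-1)}_i)$, $i=1,\dots,n$; 2. choose $v_i^{(k)}\in\partial(-g)(z_i)$, $i=1,\dots,n$ (the subdifferential of the convex function $-g$ at $z_i$); 3. set $\mathbf f^{(k)}\in\arg\min_{\mathbf f\in\Omega}\sum_{i=1}^n s(y_i,f_i)\,(-v_i^{(k)})$ (a minimizer is assumed to exist at every step). Then the sequence $\rho(\mathbf f^{(k)})$, $k=0,1,2,\dots$, is nonincreasing and converges.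
   Context: CC-family (concave convex family): a loss $\ell=g\circ s$, i.e. $\ell(y,f)=g(s(y,f))$, where (i) $g$ is a nondecreasing closed concave function whose domain contains the range of $s$; (ii) for every $z$ in the range of $s$, the subdifferential $\partial(-g)(z)$ is nonempty and bounded; (iii) $s$ is convex (in its second argument $f$). Here $\partial(-g)(z)$ denotes the subdifferential of the convex function $-g$ at $z$, which equals $\{-g'(z)\}$ when $g$ is differentiable at $z$. Examples of $g$ include $g(z)=\min(\sigma,z)$ and $g(z)=\sigma^2(1-\exp(-z/\sigma^2))$ for $z\ge 0$, $\sigma>0$; examples of $s$ include the squared loss and negative log-likelihoods of exponential-family models. *)

theory Defs
  imports "HOL-Analysis.Analysis"
begin

definition fun_span :: "('a \<Rightarrow> real) set \<Rightarrow> ('a \<Rightarrow> real) set" where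
  "fun_span H = {f. \<exists>S c. finite S \<and> S \<subseteq> H \<and> f = (\<lambda>t. \<Sum>h\<in>S. c h * h t)}"

definition Omega :: "('p \<Rightarrow> real) set \<Rightarrow> ('n::finite \<Rightarrow> 'p) \<Rightarrow> (real^'n) set" where
  "Omega H x = {(\<chi> i. f (x i)) | f. f \<in> fun_span H}"

text \<open>Subdifferential of the convex function -g (extended by +infinity outside D) at z.\<close>
definition subdiff_neg :: "(real \<Rightarrow> real) \<Rightarrow> real set \<Rightarrow> real \<Rightarrow> real set" where
  "subdiff_neg g D z = {v. \<forall>w\<in>D. - g w \<ge> - g z + v * (w - z)}"

definition CC_family :: "(real \<Rightarrow> real) \<Rightarrow> real set \<Rightarrow> (real \<Rightarrow> real \<Rightarrow> real) \<Rightarrow> bool" where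
  "CC_family g D s \<longleftrightarrow>
     convex D \<and> concave_on D g \<and> mono_on D g \<and>
     closed {(z, t). z \<in> D \<and> t \<le> g z} \<and>
     range (\<lambda>(a, b). s a b) \<subseteq> D \<and>
     (\<forall>z \<in> range (\<lambda>(a, b). s a b). subdiff_neg g D z \<noteq> {} \<and> bounded (subdiff_neg g D z)) \<and>
     (\<forall>a. convex_on UNIV (s a))"

definition rho :: "(real \<Rightarrow> real) \<Rightarrow> (real \<Rightarrow> real \<Rightarrow> real) \<Rightarrow> ('n::finite \<Rightarrow> real) \<Rightarrow> real^'n \<Rightarrow> real" where
  "rho g s y f = (\<Sum>i\<in>UNIV. g (s (y i) (f $ i)))"

end

theory Submission
  imports Defs
begin

text \<open>Each step is a majorize-minimize step. A subgradient v of -g at z gives the linear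
  majorant g w \<le> g z - v (w - z) of the concave g, tight at w = z. Summed over the
  observations, the new iterate minimizes the nonconstant part of this majorant, so rho
  cannot increase; being bounded below by n times a lower bound of g, it converges.\<close>

lemma CC_family_loss_in_domain:
  assumes "CC_family g D s"
  shows "s a b \<in> D"
proof -
  have "s a b \<in> range (\<lambda>(a, b). s a b)"
    by (rule range_eqI[of _ _ "(a, b)"]) simp
  then show ?thesis
    using assms unfolding CC_family_def by blast
qed

lemma subdiff_neg_linear_majorant:
  assumes "v \<in> subdiff_neg g D z" and "w \<in> D"
  shows "g w \<le> g z - v * (w - z)"
  using assms unfolding subdiff_neg_def by (auto simp: algebra_simps)

lemma sum_majorize_minimize_le:
  fixes z w v :: "'i \<Rightarrow> real"
  assumes subgrad: "\<And>i. i \<in> I \<Longrightarrow> v i \<in> subdiff_neg g D (z i)"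
    and dom: "\<And>i. i \<in> I \<Longrightarrow> w i \<in> D"
    and minimal: "(\<Sum>i\<in>I. w i * - v i) \<le> (\<Sum>i\<in>I. z i * - v i)"
  shows "(\<Sum>i\<in>I. g (w i)) \<le> (\<Sum>i\<in>I. g (z i))"
proof -
  have "(\<Sum>i\<in>I. g (w i)) \<le> (\<Sum>i\<in>I. g (z i) + (w i * - v i - z i * - v i))"
    using subdiff_neg_linear_majorant[OF subgrad dom]
    by (intro sum_mono) (simp add: algebra_simps)
  also have "\<dots> = (\<Sum>i\<in>I. g (z i)) + ((\<Sum>i\<in>I. w i * - v i) - (\<Sum>i\<in>I. z i * - v i))"
    by (simp add: sum.distrib sum_subtractf sum_negf)
  also have "\<dots> \<le> (\<Sum>i\<in>I. g (z i))"
    using minimal by simp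
  finally show ?thesis .
qed

lemma rho_lower_bound:
  assumes "CC_family g D s" and "\<forall>z\<in>D. B \<le> g z"
  shows "real CARD('n) * B \<le> rho g s y (f :: real^'n::finite)"
proof -
  have "(\<Sum>i\<in>(UNIV::'n set). B) \<le> rho g s y f"
    unfolding rho_def using assms CC_family_loss_in_domain by (intro sum_mono) blast
  then show ?thesis by simp
qed

theorem theorem1:
  fixes x :: "'n::finite \<Rightarrow> real^'p"
    and y :: "'n \<Rightarrow> real"
    and H :: "(real^'p \<Rightarrow> real) set"
    and s :: "real \<Rightarrow> real \<Rightarrow> real"
    and g :: "real \<Rightarrow> real"
    and D :: "real set"
    and fs :: "nat \<Rightarrow> real^'n"
    and v :: "nat \<Rightarrow> real^'n"
  assumes cc: "CC_family g D s"
    and bdd: "\<exists>B. \<forall>z\<in>D. B \<le> g z"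
    and start: "fs 0 \<in> Omega H x"
    and subgrad: "\<And>k i. v (Suc k) $ i \<in> subdiff_neg g D (s (y i) (fs k $ i))"
    and memb: "\<And>k. fs (Suc k) \<in> Omega H x"
    and argmin: "\<And>k f. f \<in> Omega H x \<Longrightarrow>
        (\<Sum>i\<in>UNIV. s (y i) (fs (Suc k) $ i) * (- (v (Suc k) $ i)))
          \<le> (\<Sum>i\<in>UNIV. s (y i) (f $ i) * (- (v (Suc k) $ i)))"
  shows "decseq (\<lambda>k. rho g s y (fs k)) \<and> convergent (\<lambda>k. rho g s y (fs k))"
proof -
  have in_Omega: "fs k \<in> Omega H x" for k
    using start memb by (cases k) auto
  have dec: "decseq (\<lambda>k. rho g s y (fs k))"
  proof (rule decseq_SucI)
    fix k
    show "rho g s y (fs (Suc k)) \<le> rho g s y (fs k)"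
      unfolding rho_def
      using subgrad CC_family_loss_in_domain[OF cc] argmin[OF in_Omega]
      by (rule sum_majorize_minimize_le)
  qed
  obtain B where "\<forall>z\<in>D. B \<le> g z"
    using bdd by blast
  then have "\<forall>k. real CARD('n) * B \<le> rho g s y (fs k)"
    using rho_lower_bound[OF cc] by blast
  then obtain L where "(\<lambda>k. rho g s y (fs k)) \<longlonglongrightarrow> L"
    using decseq_convergent[OF dec] by blast
  with dec show ?thesis
    by (auto intro: convergentI)
qed

end
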